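(* Let $0\le r\le n$. Every operator $T=P(x,u_0,\dots,u_r)$, with $P$ a real polynomial, can be written uniquely as a finite sum $$T=p(x)+\sum_{i}p_i(x)K_{ri}+\sum_{i\le j}p_{ij}(x)K_{ri}K_{rj}+\sum_{i\le j\le k}p_{ijk}(x)K_{ri}K_{rj}K_{rk}+\cdots$$ with all indices in $\{0,\dots,r\}$, coefficients $p,p_i,p_{ij},\dots\in\mathbb R[x]$, and products taken pointwise. Moreover $T(\mathcal P_n)\subset\mathcal P_n$ if and only if every coefficient of a term of degree $\ell$ in the $K_{ri}$ lies in $\mathcal P_{\ell r-(\ell-1)n}$; that is, $p\in\mathcal P_n$, $p_i\in\mathcal P_r$, $p_{ij}\in\mathcal P_{2r-n}$, $p_{ijk}\in\mathcal P_{3r-2n}$, etc.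
   Context: Operators of order $\le r$ are identified with polynomials $P(x,u_0,\dots,u_r)$ acting on a smooth $f$ by $P[f](x)=P(x,f(x),f'(x),\dots,f^{(r)}(x))$. $\mathcal P_s$ is the space of real polynomials in $x$ of degree $\le s$, and $\mathcal P_s=\{0\}$ for $s<0$. For $0\le j\le r\le n$, $K_{rj}$ is the linear operator $K_{rj}=\sum_{k=0}^{r-j}(-1)^k\binom{n-k-j}{n-r}\frac{x^k}{k!}u_{k+j}$ (equivalently $K_{rj}=\frac{1}{(r-j)!}(n-j-xD)_{r-j}D^j$ with $D=d/dx$ and $(a-xD)_k=(-1)^k(xD-a)(xD-a+1)\cdots(xD-a+k-1)$). *)

theory Defs
  imports "HOL-Computational_Algebra.Polynomial" "HOL-Library.Poly_Mapping" "HOL-Library.Multiset"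
begin

text \<open>A differential operator P(x,u_0,...,u_r) with P a real polynomial is represented as
  a polynomial in the variables u_0,u_1,... (monomials are finitely supported exponent maps
  nat =>0 nat, variable i standing for u_i) with coefficients in R[x].\<close>

type_synonym diffop = "(nat \<Rightarrow>\<^sub>0 nat) \<Rightarrow>\<^sub>0 real poly"

definition order_le :: "nat \<Rightarrow> diffop \<Rightarrow> bool" where
  "order_le r T \<longleftrightarrow> (\<forall>m \<in> Poly_Mapping.keys T. Poly_Mapping.keys m \<subseteq> {0..r})"

definition apply_op :: "diffop \<Rightarrow> real poly \<Rightarrow> real \<Rightarrow> real" where
  "apply_op T f x = (\<Sum>m\<in>Poly_Mapping.keys T. poly (Poly_Mapping.lookup T m) x *
       (\<Prod>i\<in>Poly_Mapping.keys m. (poly ((pderiv ^^ i) f) x) ^ Poly_Mapping.lookup m i))"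

definition coeff_op :: "real poly \<Rightarrow> diffop" where
  "coeff_op p = Poly_Mapping.single 0 p"

definition uvar :: "nat \<Rightarrow> diffop" where
  "uvar i = Poly_Mapping.single (Poly_Mapping.single i 1) 1"

definition K :: "nat \<Rightarrow> nat \<Rightarrow> nat \<Rightarrow> diffop" where
  "K n r j = (\<Sum>k = 0..r - j.
      coeff_op (monom ((-1) ^ k * real ((n - k - j) choose (n - r)) / fact k) k) * uvar (k + j))"

definition Pset :: "int \<Rightarrow> real poly set" where
  "Pset s = (if s < 0 then {0} else {p. degree p \<le> nat s})"

text \<open>Admissible coefficient families: indexed by multisets of indices in {0..r}
  (a multiset M = {i <= j <= ...} stands for the product K_ri K_rj ...), finitely many nonzero.\<close>
definition admissible :: "nat \<Rightarrow> (nat multiset \<Rightarrow> real poly) \<Rightarrow> bool" where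
  "admissible r c \<longleftrightarrow> finite {M. c M \<noteq> 0} \<and> (\<forall>M. c M \<noteq> 0 \<longrightarrow> set_mset M \<subseteq> {0..r})"

definition K_expansion :: "nat \<Rightarrow> nat \<Rightarrow> (nat multiset \<Rightarrow> real poly) \<Rightarrow> diffop" where
  "K_expansion n r c = (\<Sum>M \<in> {M. c M \<noteq> 0}. coeff_op (c M) * (\<Prod>i\<in>#M. K n r i))"

definition preserves :: "nat \<Rightarrow> diffop \<Rightarrow> bool" where
  "preserves n T \<longleftrightarrow> (\<forall>f. degree f \<le> n \<longrightarrow> (\<exists>q. degree q \<le> n \<and> (\<forall>x. apply_op T f x = poly q x)))"

end

(* Evaluating an operator at a point x and at arbitrary values v_i of the variables u_i is a
   ring homomorphism.  Since K_ri = binom(n-i, n-r) u_i + (terms in u_(i+1), ..., u_r), the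
   system is triangular with nonzero diagonal.  Solving it for the u_i expresses every
   operator of order r through the K_ri, and at every x the values of K_r0, ..., K_rr can be
   prescribed arbitrarily; since a polynomial vanishing everywhere has zero coefficients, the
   expansion is unique.
   On polynomials, K_ri maps P_n into P_(n-r), and the coefficient of x^(n-r) in K_ri[f] is a
   nonzero multiple of the coefficient of x^(n-r+i) in f, which is free.  Hence the term
   p_M K_M (K_M the product of the K_ri over the multiset M) maps P_n into
   P_(deg p_M + |M|(n-r)), which gives sufficiency.  Conversely, if D = max (deg p_M + |M|(n-r))
   exceeds n, the coefficient of x^D in T[f] is a polynomial in these free coefficients whose
   coefficients are the leading coefficients of the p_M attaining the maximum; it must vanish
   identically, which is impossible. *)

theory Submission
  imports Defs "HOL-Computational_Algebra.Formal_Power_Series"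
begin

section \<open>Evaluation of operators\<close>

definition eval_monom :: "(nat \<Rightarrow> 'a::comm_monoid_mult) \<Rightarrow> (nat \<Rightarrow>\<^sub>0 nat) \<Rightarrow> 'a" where
  "eval_monom v m = (\<Prod>i\<in>Poly_Mapping.keys m. v i ^ Poly_Mapping.lookup m i)"

definition eval_op :: "(nat \<Rightarrow> 'a::comm_semiring_1) \<Rightarrow> 'a \<Rightarrow> ((nat \<Rightarrow>\<^sub>0 nat) \<Rightarrow>\<^sub>0 'a poly) \<Rightarrow> 'a" where
  "eval_op v x T = (\<Sum>m\<in>Poly_Mapping.keys T. poly (Poly_Mapping.lookup T m) x * eval_monom v m)"

lemma eval_monom_superset:
  assumes "finite S" "Poly_Mapping.keys m \<subseteq> S"
  shows "eval_monom v m = (\<Prod>i\<in>S. v i ^ Poly_Mapping.lookup m i)"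
  unfolding eval_monom_def
  by (rule prod.mono_neutral_left) (use assms in \<open>auto simp: in_keys_iff\<close>)

lemma eval_monom_add: "eval_monom v (a + b) = eval_monom v a * eval_monom v b"
proof -
  let ?S = "Poly_Mapping.keys a \<union> Poly_Mapping.keys b"
  have "eval_monom v (a + b) = (\<Prod>i\<in>?S. v i ^ Poly_Mapping.lookup (a + b) i)"
    by (rule eval_monom_superset) (auto dest: subsetD[OF keys_add])
  also have "\<dots> = (\<Prod>i\<in>?S. v i ^ Poly_Mapping.lookup a i) * (\<Prod>i\<in>?S. v i ^ Poly_Mapping.lookup b i)"
    by (simp add: lookup_add power_add prod.distrib)
  also have "\<dots> = eval_monom v a * eval_monom v b"
    by (subst (1 2) eval_monom_superset[of ?S]) auto
  finally show ?thesis .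
qed

lemma eval_monom_0 [simp]: "eval_monom v 0 = 1"
  by (simp add: eval_monom_def)

lemma eval_monom_single [simp]: "eval_monom v (Poly_Mapping.single i k) = v i ^ k"
  by (cases "k = 0") (simp_all add: eval_monom_def)

lemma eval_op_single [simp]: "eval_op v x (Poly_Mapping.single m p) = poly p x * eval_monom v m"
  by (simp add: eval_op_def)

lemma eval_op_0 [simp]: "eval_op v x 0 = 0"
  by (simp add: eval_op_def)

lemma eval_op_1 [simp]: "eval_op v x 1 = 1"
  by (simp add: eval_op_def eval_monom_def)

lemma eval_op_add: "eval_op v x (A + B) = eval_op v x A + eval_op v x B"
  unfolding eval_op_def by (rule setsum_keys_plus_distrib) (simp_all add: distrib_right)

lemma eval_op_sum: "eval_op v x (\<Sum>i\<in>I. f i) = (\<Sum>i\<in>I. eval_op v x (f i))"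
  by (induction I rule: infinite_finite_induct) (simp_all add: eval_op_add)

lemma sum_single_lookup: "(\<Sum>k\<in>Poly_Mapping.keys A. Poly_Mapping.single k (Poly_Mapping.lookup A k)) = A"
  by (rule poly_mapping_eqI) (simp add: lookup_sum lookup_single when_def in_keys_iff sum.If_cases)

lemma eval_op_mult: "eval_op v x (A * B) = eval_op v x A * eval_op v x B"
proof -
  let ?KA = "Poly_Mapping.keys A" and ?KB = "Poly_Mapping.keys B"
  let ?a = "Poly_Mapping.lookup A" and ?b = "Poly_Mapping.lookup B"
  have "A * B = (\<Sum>k\<in>?KA. Poly_Mapping.single k (?a k)) * (\<Sum>l\<in>?KB. Poly_Mapping.single l (?b l))"
    by (simp add: sum_single_lookup)
  also have "\<dots> = (\<Sum>k\<in>?KA. \<Sum>l\<in>?KB. Poly_Mapping.single (k + l) (?a k * ?b l))"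
    by (simp add: sum_product mult_single)
  finally have "eval_op v x (A * B) =
      (\<Sum>k\<in>?KA. \<Sum>l\<in>?KB. poly (?a k) x * eval_monom v k * (poly (?b l) x * eval_monom v l))"
    by (simp add: eval_op_sum eval_monom_add mult_ac)
  also have "\<dots> = eval_op v x A * eval_op v x B"
    by (simp add: eval_op_def sum_product)
  finally show ?thesis .
qed

lemma eval_op_prod_mset: "eval_op v x (\<Prod>i\<in>#M. g i) = (\<Prod>i\<in>#M. eval_op v x (g i))"
  by (induction M) (simp_all add: eval_op_mult)

lemma eval_op_coeff_op [simp]: "eval_op v x (coeff_op p) = poly p x"
  by (simp add: coeff_op_def)

lemma eval_op_uvar [simp]: "eval_op v x (uvar i) = v i"
  by (simp add: uvar_def)

lemma apply_op_eq_eval_op: "apply_op T f x = eval_op (\<lambda>i. poly ((pderiv ^^ i) f) x) x T"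
  by (simp add: apply_op_def eval_op_def eval_monom_def)

lemma eval_op_K:
  "eval_op v x (K n r j) =
     (\<Sum>k = 0..r - j. (-1) ^ k * real ((n - k - j) choose (n - r)) / fact k * x ^ k * v (k + j))"
  by (simp add: K_def eval_op_sum eval_op_mult poly_monom)

lemma eval_op_K_diagonal_plus_tail:
  "eval_op v x (K n r j) = real ((n - j) choose (n - r)) * v j +
     (\<Sum>k = 1..r - j. (-1) ^ k * real ((n - k - j) choose (n - r)) / fact k * x ^ k * v (k + j))"
  by (simp add: eval_op_K sum.atLeast_Suc_atMost[of 0])

lemma coeff_op_add: "coeff_op (p + q) = coeff_op p + coeff_op q"
  by (simp add: coeff_op_def single_add)

lemma coeff_op_mult: "coeff_op (p * q) = coeff_op p * coeff_op q"
  by (simp add: coeff_op_def mult_single)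

lemma coeff_op_1 [simp]: "coeff_op 1 = 1"
  by (simp add: coeff_op_def)

lemma coeff_op_0 [simp]: "coeff_op 0 = 0"
  by (simp add: coeff_op_def)

lemma coeff_op_uminus: "coeff_op (- p) = - coeff_op p"
  by (simp add: coeff_op_def single_uminus)

section \<open>Existence and uniqueness of the expansion\<close>

lemma prod_mset_fun_upd:
  "(\<Prod>i\<in>#M. (w(k := t)) i) = (\<Prod>i\<in>#filter_mset (\<lambda>i. i \<noteq> k) M. w i) * t ^ count M k"
  by (induction M) (simp_all add: mult_ac)

lemma monomial_sum_eq_0_imp_slice_eq_0:
  fixes a :: "'i \<Rightarrow> 'b::{idom,ring_char_0}"
  assumes "finite I" "\<And>w. (\<Sum>i\<in>I. a i * (\<Prod>x\<in>#\<mu> i. w x)) = 0"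
  shows "(\<Sum>i | i \<in> I \<and> count (\<mu> i) k = j. a i * (\<Prod>x\<in>#filter_mset (\<lambda>x. x \<noteq> k) (\<mu> i). w x)) = 0"
proof -
  define P where "P = (\<Sum>i\<in>I. monom (a i * (\<Prod>x\<in>#filter_mset (\<lambda>x. x \<noteq> k) (\<mu> i). w x)) (count (\<mu> i) k))"
  have "poly P t = (\<Sum>i\<in>I. a i * (\<Prod>x\<in>#\<mu> i. (w(k := t)) x))" for t
    by (simp add: P_def poly_sum poly_monom prod_mset_fun_upd mult_ac del: fun_upd_apply)
  then have "P = 0"
    using assms(2) poly_all_0_iff_0 by metis
  then have "coeff P j = 0" by simp
  then show ?thesis
    using assms(1) by (simp add: P_def coeff_sum coeff_monom sum.inter_filter)
qed

lemma monomial_coeffs_eq_0: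
  fixes a :: "'i \<Rightarrow> 'b::{idom,ring_char_0}" and \<mu> :: "'i \<Rightarrow> 'a multiset"
  assumes "finite V" "finite I" "inj_on \<mu> I" "\<And>i. i \<in> I \<Longrightarrow> set_mset (\<mu> i) \<subseteq> V"
    and "\<And>w. (\<Sum>i\<in>I. a i * (\<Prod>x\<in>#\<mu> i. w x)) = 0" and "i \<in> I"
  shows "a i = 0"
  using assms
proof (induction V arbitrary: I \<mu> i rule: finite_induct)
  case empty
  then have "I = {i}" "\<mu> i = {#}"
    by (auto intro: inj_onD[of \<mu> I])
  then show ?case
    using empty.prems(4) by simp
next
  case (insert k V)
  define J where "J = {i' \<in> I. count (\<mu> i') k = count (\<mu> i) k}"
  define \<mu>' where "\<mu>' i' = filter_mset (\<lambda>x. x \<noteq> k) (\<mu> i')" for i'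
  have \<mu>: "\<mu> i' = \<mu>' i' + replicate_mset (count (\<mu> i') k) k" for i'
    unfolding \<mu>'_def by (rule multiset_eqI) simp
  show ?case
  proof (rule insert.IH[of J \<mu>'])
    show "finite J" "i \<in> J"
      using insert.prems(1,5) by (simp_all add: J_def)
    show "inj_on \<mu>' J"
    proof (rule inj_onI)
      fix i1 i2 assume "i1 \<in> J" "i2 \<in> J" "\<mu>' i1 = \<mu>' i2"
      then have "\<mu> i1 = \<mu> i2"
        unfolding J_def by (metis (mono_tags, lifting) \<mu> mem_Collect_eq)
      then show "i1 = i2"
        using insert.prems(2) \<open>i1 \<in> J\<close> \<open>i2 \<in> J\<close> by (auto simp: J_def dest: inj_onD)
    qed
    show "set_mset (\<mu>' i') \<subseteq> V" if "i' \<in> J" for i'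
      using insert.prems(3)[of i'] insert.hyps(2) that by (auto simp: J_def \<mu>'_def)
    show "(\<Sum>i'\<in>J. a i' * (\<Prod>x\<in>#\<mu>' i'. w x)) = 0" for w
      unfolding J_def \<mu>'_def by (rule monomial_sum_eq_0_imp_slice_eq_0[OF insert.prems(1,4)])
  qed
qed

lemma K_expansion_eq_sum:
  assumes "finite S" "{M. c M \<noteq> 0} \<subseteq> S"
  shows "K_expansion n r c = (\<Sum>M\<in>S. coeff_op (c M) * (\<Prod>i\<in>#M. K n r i))"
  unfolding K_expansion_def
  by (rule sum.mono_neutral_left) (use assms in auto)

lemma admissibleI:
  assumes "finite S" "{M. c M \<noteq> 0} \<subseteq> S" "\<And>M. M \<in> S \<Longrightarrow> set_mset M \<subseteq> {0..r}"
  shows "admissible r c"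
  using assms unfolding admissible_def by (auto intro: finite_subset)

definition K_expansions :: "nat \<Rightarrow> nat \<Rightarrow> diffop set" where
  "K_expansions n r = {K_expansion n r c | c. admissible r c}"

lemma K_expansionsI: "admissible r c \<Longrightarrow> K_expansion n r c = A \<Longrightarrow> A \<in> K_expansions n r"
  unfolding K_expansions_def by auto

lemma K_expansionsE:
  assumes "A \<in> K_expansions n r"
  obtains c where "admissible r c" "A = K_expansion n r c"
  using assms unfolding K_expansions_def by auto

lemma K_expansions_add:
  assumes "A \<in> K_expansions n r" "B \<in> K_expansions n r"
  shows "A + B \<in> K_expansions n r"
proof -
  obtain a b where ab: "admissible r a" "A = K_expansion n r a" "admissible r b" "B = K_expansion n r b"
    using assms by (meson K_expansionsE)
  define S where "S = {M. a M \<noteq> 0} \<union> {M. b M \<noteq> 0}"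
  have S: "finite S" "\<And>M. M \<in> S \<Longrightarrow> set_mset M \<subseteq> {0..r}"
    using ab unfolding S_def admissible_def by auto
  have "admissible r (\<lambda>M. a M + b M)"
    by (rule admissibleI[OF S(1) _ S(2)]) (auto simp: S_def)
  moreover have "K_expansion n r (\<lambda>M. a M + b M) = A + B"
    unfolding ab(2,4) using S(1)
    by (subst (1 2 3) K_expansion_eq_sum[of S]) (auto simp: S_def coeff_op_add distrib_right sum.distrib)
  ultimately show ?thesis
    by (rule K_expansionsI)
qed

lemma K_expansions_coeff_op_mult:
  assumes "A \<in> K_expansions n r"
  shows "coeff_op p * A \<in> K_expansions n r"
proof -
  obtain a where a: "admissible r a" "A = K_expansion n r a"
    using assms(1) by (rule K_expansionsE)
  define S where "S = {M. a M \<noteq> 0}"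
  have S: "finite S" "\<And>M. M \<in> S \<Longrightarrow> set_mset M \<subseteq> {0..r}"
    using a unfolding S_def admissible_def by auto
  have "admissible r (\<lambda>M. p * a M)"
    by (rule admissibleI[OF S(1) _ S(2)]) (auto simp: S_def)
  moreover have "K_expansion n r (\<lambda>M. p * a M) = coeff_op p * A"
    unfolding a(2) using S(1)
    by (subst (1 2) K_expansion_eq_sum[of S]) (auto simp: S_def coeff_op_mult sum_distrib_left mult.assoc)
  ultimately show ?thesis
    by (rule K_expansionsI)
qed

lemma K_expansions_K_mult:
  assumes "A \<in> K_expansions n r" "j \<le> r"
  shows "K n r j * A \<in> K_expansions n r"
proof -
  obtain a where a: "admissible r a" "A = K_expansion n r a"
    using assms(1) by (rule K_expansionsE)
  define S where "S = {M. a M \<noteq> 0}"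
  have S: "finite S" "\<And>M. M \<in> S \<Longrightarrow> set_mset M \<subseteq> {0..r}"
    using a unfolding S_def admissible_def by auto
  define b where "b M = (if j \<in># M then a (M - {#j#}) else 0)" for M
  have supp: "{M. b M \<noteq> 0} \<subseteq> add_mset j ` S"
    by (auto simp: b_def S_def split: if_splits intro!: image_eqI[of _ _ "_ - {#j#}"])
  have "set_mset M \<subseteq> {0..r}" if "M \<in> add_mset j ` S" for M
    using that S(2) assms(2) by fastforce
  then have "admissible r b"
    by (rule admissibleI[OF finite_imageI[OF S(1)] supp])
  moreover have "K_expansion n r b = K n r j * A"
  proof -
    have "K_expansion n r b = (\<Sum>M\<in>add_mset j ` S. coeff_op (b M) * (\<Prod>i\<in>#M. K n r i))"
      using S(1) supp by (rule K_expansion_eq_sum[OF finite_imageI])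
    also have "\<dots> = (\<Sum>M\<in>S. K n r j * (coeff_op (a M) * (\<Prod>i\<in>#M. K n r i)))"
      by (subst sum.reindex) (auto simp: inj_on_def b_def mult_ac)
    also have "\<dots> = K n r j * A"
      by (simp add: a(2) K_expansion_def S_def sum_distrib_left)
    finally show ?thesis .
  qed
  ultimately show ?thesis
    by (rule K_expansionsI)
qed

lemma one_in_K_expansions: "1 \<in> K_expansions n r"
proof -
  define c :: "nat multiset \<Rightarrow> real poly" where "c M = (if M = {#} then 1 else 0)" for M
  have supp: "{M. c M \<noteq> 0} = {{#}}"
    by (auto simp: c_def)
  then have "admissible r c"
    by (intro admissibleI[of "{{#}}"]) auto
  moreover have "K_expansion n r c = 1"
    by (simp add: K_expansion_def supp c_def)
  ultimately show ?thesis
    by (rule K_expansionsI)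
qed

lemma K_expansions_sum:
  assumes "\<And>i. i \<in> I \<Longrightarrow> f i \<in> K_expansions n r"
  shows "(\<Sum>i\<in>I. f i) \<in> K_expansions n r"
proof -
  have "coeff_op 0 * 1 \<in> K_expansions n r"
    by (intro K_expansions_coeff_op_mult one_in_K_expansions)
  then have "0 \<in> K_expansions n r"
    by simp
  then show ?thesis
    using assms by (induction I rule: infinite_finite_induct) (auto intro: K_expansions_add)
qed

lemma K_expansions_diff:
  assumes "A \<in> K_expansions n r" "B \<in> K_expansions n r"
  shows "A - B \<in> K_expansions n r"
  using K_expansions_add[OF assms(1) K_expansions_coeff_op_mult[OF assms(2), of "-1"]]
  by (simp add: coeff_op_uminus)

lemma K_eq_diagonal_plus_tail:
  "K n r j = coeff_op [:real ((n - j) choose (n - r)):] * uvar j +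
    (\<Sum>k = 1..r - j. coeff_op (monom ((-1) ^ k * real ((n - k - j) choose (n - r)) / fact k) k) * uvar (k + j))"
  unfolding K_def by (simp add: sum.atLeast_Suc_atMost[of 0] monom_0)

lemma uvar_mult_in_K_expansions:
  assumes "r \<le> n" "j \<le> r" "A \<in> K_expansions n r"
  shows "uvar j * A \<in> K_expansions n r"
  using assms(2)
proof (induction "r - j" arbitrary: j rule: less_induct)
  case less
  define d where "d = real ((n - j) choose (n - r))"
  define tail where "tail = (\<Sum>k = 1..r - j.
      coeff_op (monom ((-1) ^ k * real ((n - k - j) choose (n - r)) / fact k) k) * (uvar (k + j) * A))"
  have "d \<noteq> 0"
    using less.prems assms(1) by (simp add: d_def)
  have "tail \<in> K_expansions n r"
    unfolding tail_def using less.prems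
    by (intro K_expansions_sum K_expansions_coeff_op_mult less.hyps) auto
  have KA: "K n r j * A = coeff_op [:d:] * (uvar j * A) + tail"
    by (simp add: K_eq_diagonal_plus_tail d_def tail_def distrib_right sum_distrib_right mult.assoc)
  have "coeff_op [:1 / d:] * coeff_op [:d:] = 1"
    using \<open>d \<noteq> 0\<close> by (simp add: coeff_op_mult[symmetric] pCons_one)
  then have "uvar j * A = coeff_op [:1 / d:] * (coeff_op [:d:] * (uvar j * A))"
    by (simp add: mult.assoc[symmetric])
  also have "\<dots> = coeff_op [:1 / d:] * (K n r j * A - tail)"
    unfolding KA by simp
  also have "\<dots> \<in> K_expansions n r"
    by (intro K_expansions_coeff_op_mult K_expansions_diff K_expansions_K_mult assms(3) less.prems
        \<open>tail \<in> K_expansions n r\<close>)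
  finally show ?case .
qed

lemma single_eq_coeff_op_mult_uvars:
  "Poly_Mapping.single m p = coeff_op p * (\<Prod>i\<in>Poly_Mapping.keys m. uvar i ^ Poly_Mapping.lookup m i)"
proof -
  have "uvar i ^ k = Poly_Mapping.single (Poly_Mapping.single i k) 1" for i k
    by (induction k) (simp_all add: uvar_def mult_single single_add[symmetric])
  moreover have "(\<Prod>i\<in>A. Poly_Mapping.single (g i) (1 :: real poly)) = Poly_Mapping.single (\<Sum>i\<in>A. g i) 1"
    for A and g :: "nat \<Rightarrow> nat \<Rightarrow>\<^sub>0 nat"
    by (induction A rule: infinite_finite_induct) (simp_all add: mult_single)
  ultimately show ?thesis
    by (simp add: sum_single_lookup coeff_op_def mult_single)
qed

lemma order_le_imp_in_K_expansions:
  assumes "r \<le> n" "order_le r T"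
  shows "T \<in> K_expansions n r"
proof -
  have uvar_prod: "(\<Prod>i\<in>I. uvar i ^ g i) * A \<in> K_expansions n r"
    if "finite I" "I \<subseteq> {0..r}" "A \<in> K_expansions n r" for I g A
    using that
  proof (induction I rule: finite_induct)
    case (insert i I)
    have "uvar i ^ k * B \<in> K_expansions n r" if "B \<in> K_expansions n r" for k B
      using that insert.prems assms(1) by (induction k) (simp_all add: mult.assoc uvar_mult_in_K_expansions)
    then show ?case
      using insert by (simp add: mult.assoc)
  qed simp
  have "T = (\<Sum>m\<in>Poly_Mapping.keys T. Poly_Mapping.single m (Poly_Mapping.lookup T m))"
    by (simp add: sum_single_lookup)
  also have "\<dots> \<in> K_expansions n r"
  proof (intro K_expansions_sum)
    fix m assume "m \<in> Poly_Mapping.keys T"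
    then have "Poly_Mapping.keys m \<subseteq> {0..r}"
      using assms(2) by (simp add: order_le_def)
    then show "Poly_Mapping.single m (Poly_Mapping.lookup T m) \<in> K_expansions n r"
      using uvar_prod K_expansions_coeff_op_mult[OF one_in_K_expansions]
      by (simp add: single_eq_coeff_op_mult_uvars mult.commute)
  qed
  finally show ?thesis .
qed

lemma K_values_surj:
  assumes "r \<le> n"
  shows "\<exists>v. \<forall>i\<le>r. eval_op v x (K n r i) = w i"
proof -
  have "\<exists>v. \<forall>i\<in>{q..r}. eval_op v x (K n r i) = w i" if "q \<le> Suc r" for q
    using that
  proof (induction q rule: inc_induct)
    case (step q)
    then obtain v where v: "\<forall>i\<in>{Suc q..r}. eval_op v x (K n r i) = w i"
      by blast
    define d where "d = real ((n - q) choose (n - r))"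
    define tail where "tail = (\<Sum>k = 1..r - q. (-1) ^ k * real ((n - k - q) choose (n - r)) / fact k * x ^ k * v (k + q))"
    define v' where "v' = v(q := (w q - tail) / d)"
    have "d \<noteq> 0"
      using step.hyps assms by (simp add: d_def)
    have "eval_op v' x (K n r i) = eval_op v x (K n r i)" if "q < i" for i
      using that by (auto simp: eval_op_K v'_def intro!: sum.cong)
    moreover have "eval_op v' x (K n r q) = w q"
    proof -
      have "(\<Sum>k = 1..r - q. (-1) ^ k * real ((n - k - q) choose (n - r)) / fact k * x ^ k * v' (k + q)) = tail"
        by (auto simp: tail_def v'_def intro!: sum.cong)
      then show ?thesis
        using \<open>d \<noteq> 0\<close> by (simp add: eval_op_K_diagonal_plus_tail d_def[symmetric] v'_def)
    qed
    ultimately have "\<forall>i\<in>{q..r}. eval_op v' x (K n r i) = w i"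
      using v by (metis Suc_le_eq atLeastAtMost_iff le_neq_implies_less)
    then show ?case
      by blast
  qed auto
  from this[of 0] show ?thesis
    by force
qed

lemma eval_op_K_expansion:
  assumes "finite S" "{M. c M \<noteq> 0} \<subseteq> S"
  shows "eval_op v x (K_expansion n r c) = (\<Sum>M\<in>S. poly (c M) x * (\<Prod>i\<in>#M. eval_op v x (K n r i)))"
  by (simp add: K_expansion_eq_sum[OF assms] eval_op_sum eval_op_mult eval_op_prod_mset)

lemma K_expansion_inj:
  assumes "r \<le> n" "admissible r c" "admissible r d" "K_expansion n r c = K_expansion n r d"
  shows "c = d"
proof
  fix M
  define S where "S = {M. c M \<noteq> 0} \<union> {M. d M \<noteq> 0}"
  have S: "finite S" "\<And>M. M \<in> S \<Longrightarrow> set_mset M \<subseteq> {0..r}"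
    using assms(2,3) unfolding S_def admissible_def by auto
  have "poly (c M - d M) x = 0" if "M \<in> S" for x
  proof (rule monomial_coeffs_eq_0[OF finite_atLeastAtMost S(1) inj_on_id _ _ that])
    show "set_mset (id M') \<subseteq> {0..r}" if "M' \<in> S" for M'
      using S(2)[OF that] by simp
  next
    fix w
    obtain v where v: "\<forall>i\<le>r. eval_op v x (K n r i) = w i"
      using K_values_surj[OF assms(1)] by blast
    have "(\<Prod>i\<in>#M'. eval_op v x (K n r i)) = (\<Prod>i\<in>#M'. w i)" if "M' \<in> S" for M'
      using v S(2)[OF that] by (auto intro!: arg_cong[where f = prod_mset] image_mset_cong)
    then have "(\<Sum>M'\<in>S. poly (c M' - d M') x * (\<Prod>i\<in>#M'. w i))
        = (\<Sum>M'\<in>S. poly (c M') x * (\<Prod>i\<in>#M'. eval_op v x (K n r i)))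
          - (\<Sum>M'\<in>S. poly (d M') x * (\<Prod>i\<in>#M'. eval_op v x (K n r i)))"
      by (simp add: left_diff_distrib sum_subtractf)
    also have "\<dots> = eval_op v x (K_expansion n r c) - eval_op v x (K_expansion n r d)"
      by (subst (1 2) eval_op_K_expansion[OF S(1)]) (auto simp: S_def)
    finally show "(\<Sum>M'\<in>S. poly (c M' - d M') x * (\<Prod>i\<in>#id M'. w i)) = 0"
      using assms(4) by simp
  qed
  then show "c M = d M"
    by (cases "M \<in> S") (auto simp: S_def poly_eq_poly_eq_iff[symmetric] fun_eq_iff)
qed

section \<open>The operators K on polynomials\<close>

lemma alternating_choose_sum:
  assumes "e \<le> a" "s \<le> a"
  shows "(\<Sum>k = 0..s. (-1) ^ k * real ((a - k) choose (a - s)) * real (e choose k)) = real ((a - e) choose s)"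
proof -
  \<comment> \<open>Upper negation turns both binomials into generalised ones, and the sum becomes
    Vandermonde's convolution.\<close>
  have negated: "real ((a - k) choose (a - s)) = (-1) ^ (s - k) * ((of_nat s - of_nat a - 1) gchoose (s - k))"
    if "k \<le> s" for k
  proof -
    have "(a - k) choose (a - s) = (a - k) choose (s - k)"
      using binomial_symmetric[of "a - s" "a - k"] that assms by (simp add: diff_diff_eq2)
    moreover have "of_nat (s - k) - of_nat (a - k) - 1 = (of_nat s - of_nat a - 1 :: real)"
      using that assms by (simp add: of_nat_diff)
    ultimately show ?thesis
      by (simp only: binomial_gbinomial gbinomial_negated_upper[of "of_nat (a - k)"])
  qed
  have "(\<Sum>k = 0..s. (-1) ^ k * real ((a - k) choose (a - s)) * real (e choose k))
      = (-1) ^ s * (\<Sum>k = 0..s. (of_nat e gchoose k) * ((of_nat s - of_nat a - 1) gchoose (s - k)))"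
  proof (subst sum_distrib_left, intro sum.cong refl)
    fix k assume "k \<in> {0..s}"
    then have "(-1) ^ k * (-1) ^ (s - k) = ((-1) ^ s :: real)"
      by (simp flip: power_add)
    then show "(-1) ^ k * real ((a - k) choose (a - s)) * real (e choose k)
        = (-1) ^ s * ((of_nat e gchoose k) * ((of_nat s - of_nat a - 1) gchoose (s - k)))"
      using \<open>k \<in> {0..s}\<close> by (simp add: negated binomial_gbinomial[of e] mult_ac)
  qed
  also have "\<dots> = (-1) ^ s * ((of_nat e + (of_nat s - of_nat a - 1)) gchoose s)"
    by (simp add: gbinomial_Vandermonde)
  also have "\<dots> = real ((a - e) choose s)"
    using assms by (simp add: gbinomial_negated_upper[of "_ + _"] binomial_gbinomial of_nat_diff)
  finally show ?thesis .
qed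

definition K_poly :: "nat \<Rightarrow> nat \<Rightarrow> nat \<Rightarrow> real poly \<Rightarrow> real poly" where
  "K_poly n r j f =
     (\<Sum>k = 0..r - j. monom ((-1) ^ k * real ((n - k - j) choose (n - r)) / fact k) k * (pderiv ^^ (k + j)) f)"

lemma eval_op_K_derivatives: "eval_op (\<lambda>i. poly ((pderiv ^^ i) f) x) x (K n r j) = poly (K_poly n r j f) x"
  by (simp add: eval_op_K K_poly_def poly_sum poly_monom mult_ac)

lemma coeff_K_poly:
  "coeff (K_poly n r j f) e = coeff f (e + j) * (fact (e + j) / fact e) *
     (\<Sum>k = 0..r - j. (-1) ^ k * real ((n - k - j) choose (n - r)) * real (e choose k))"
proof -
  have "coeff (monom ((-1) ^ k * real ((n - k - j) choose (n - r)) / fact k) k * (pderiv ^^ (k + j)) f) e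
      = coeff f (e + j) * (fact (e + j) / fact e) * ((-1) ^ k * real ((n - k - j) choose (n - r)) * real (e choose k))"
    for k
  proof (cases "k \<le> e")
    case True
    have "fact (e + j) = (fact (e - k) :: real) * pochhammer (1 + of_nat (e - k)) (k + j)"
      using pochhammer_product'[of "1::real" "e - k" "k + j"] True by (simp add: pochhammer_fact)
    moreover have "real (e choose k) = fact e / (fact k * fact (e - k))"
      using True by (simp add: binomial_fact)
    ultimately show ?thesis
      using True by (simp add: coeff_monom_mult coeff_higher_pderiv)
  qed (simp add: coeff_monom_mult)
  then show ?thesis
    by (simp add: K_poly_def coeff_sum sum_distrib_left)
qed

lemma coeff_K_poly_closed_form:
  assumes "j \<le> r" "r \<le> n" "e + j \<le> n"
  shows "coeff (K_poly n r j f) e = coeff f (e + j) * (fact (e + j) / fact e) * real ((n - j - e) choose (r - j))"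
  using alternating_choose_sum[of e "n - j" "r - j"] assms
  by (simp add: coeff_K_poly diff_diff_eq2 add.commute[of _ j] diff_diff_add)

lemma degree_K_poly:
  assumes "j \<le> r" "r \<le> n" "degree f \<le> n"
  shows "degree (K_poly n r j f) \<le> n - r"
proof (rule degree_le, intro allI impI)
  fix e assume e: "n - r < e"
  show "coeff (K_poly n r j f) e = 0"
  proof (cases "e + j \<le> n")
    case True
    then have "(n - j - e) choose (r - j) = 0"
      using e assms by (simp add: binomial_eq_0)
    then show ?thesis
      using coeff_K_poly_closed_form[OF assms(1,2) True] by simp
  next
    case False
    then show ?thesis
      using assms by (simp add: coeff_K_poly coeff_eq_0)
  qed
qed

lemma coeff_K_poly_top:
  assumes "j \<le> r" "r \<le> n"
  shows "coeff (K_poly n r j f) (n - r) = coeff f (n - r + j) * (fact (n - r + j) / fact (n - r))"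
  using coeff_K_poly_closed_form[OF assms, of "n - r" f] assms by simp

lemma exists_poly_K_poly_top_coeffs:
  assumes "r \<le> n"
  shows "\<exists>f. degree f \<le> n \<and> (\<forall>i\<le>r. coeff (K_poly n r i f) (n - r) = w i)"
proof -
  define m where "m = n - r"
  define f where "f = (\<Sum>i = 0..r. monom (w i * fact m / fact (m + i)) (m + i))"
  have "degree f \<le> n"
    unfolding f_def m_def using assms by (intro degree_sum_le order.trans[OF degree_monom_le]) auto
  moreover have "coeff (K_poly n r i f) m = w i" if "i \<le> r" for i
  proof -
    have "coeff f (m + i) = w i * fact m / fact (m + i)"
      using that by (simp add: f_def coeff_sum)
    then show ?thesis
      using coeff_K_poly_top[OF that assms, of f] by (simp add: m_def)
  qed
  ultimately show ?thesis
    unfolding m_def by blast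
qed

lemma coeff_mult_at_degree_bounds:
  fixes p q :: "'a::comm_semiring_0 poly"
  assumes "degree p \<le> a" "degree q \<le> b"
  shows "coeff (p * q) (a + b) = coeff p a * coeff q b"
proof (cases "degree p = a \<and> degree q = b")
  case True
  then show ?thesis by (metis coeff_mult_degree_sum)
next
  case False
  then have "degree (p * q) < a + b"
    using assms degree_mult_le[of p q] by linarith
  moreover have "coeff p a * coeff q b = 0"
    using False assms by (auto simp: coeff_eq_0)
  ultimately show ?thesis by (simp add: coeff_eq_0)
qed

lemma degree_prod_mset_le:
  fixes g :: "'b \<Rightarrow> 'a::comm_semiring_1 poly"
  assumes "\<And>i. i \<in># M \<Longrightarrow> degree (g i) \<le> d"
  shows "degree (\<Prod>i\<in>#M. g i) \<le> size M * d"
  using assms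
proof (induction M)
  case (add x M)
  then show ?case
    by (simp add: order.trans[OF degree_mult_le] add_mono)
qed simp

lemma coeff_prod_mset_at_degree_bound:
  fixes g :: "'b \<Rightarrow> 'a::comm_semiring_1 poly"
  assumes "\<And>i. i \<in># M \<Longrightarrow> degree (g i) \<le> d"
  shows "coeff (\<Prod>i\<in>#M. g i) (size M * d) = (\<Prod>i\<in>#M. coeff (g i) d)"
  using assms
proof (induction M)
  case (add x M)
  then show ?case
    by (simp add: coeff_mult_at_degree_bounds degree_prod_mset_le)
qed simp

section \<open>Invariance of P_n\<close>

definition K_expansion_poly :: "nat \<Rightarrow> nat \<Rightarrow> (nat multiset \<Rightarrow> real poly) \<Rightarrow> real poly \<Rightarrow> real poly" where
  "K_expansion_poly n r c f = (\<Sum>M | c M \<noteq> 0. c M * (\<Prod>i\<in>#M. K_poly n r i f))"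

lemma apply_op_K_expansion: "apply_op (K_expansion n r c) f x = poly (K_expansion_poly n r c f) x"
  by (simp add: apply_op_eq_eval_op K_expansion_def K_expansion_poly_def eval_op_sum eval_op_mult
      eval_op_prod_mset eval_op_K_derivatives poly_sum poly_prod_mset)

lemma preserves_K_expansion_iff:
  "preserves n (K_expansion n r c) \<longleftrightarrow> (\<forall>f. degree f \<le> n \<longrightarrow> degree (K_expansion_poly n r c f) \<le> n)"
proof -
  have "(\<forall>x. poly (K_expansion_poly n r c f) x = poly q x) \<longleftrightarrow> K_expansion_poly n r c f = q" for f q
    by (simp flip: poly_eq_poly_eq_iff add: fun_eq_iff)
  then show ?thesis
    unfolding preserves_def apply_op_K_expansion by auto
qed

lemma K_term_degree_le:
  assumes "r \<le> n" "degree f \<le> n" "set_mset M \<subseteq> {0..r}"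
  shows "degree (p * (\<Prod>i\<in>#M. K_poly n r i f)) \<le> degree p + size M * (n - r)"
proof -
  have "degree (K_poly n r i f) \<le> n - r" if "i \<in># M" for i
    using that assms by (intro degree_K_poly) auto
  then show ?thesis
    by (intro order.trans[OF degree_mult_le] add_mono order.refl degree_prod_mset_le)
qed

lemma coeff_K_term_top:
  assumes "r \<le> n" "degree f \<le> n" "set_mset M \<subseteq> {0..r}"
  shows "coeff (p * (\<Prod>i\<in>#M. K_poly n r i f)) (degree p + size M * (n - r))
       = lead_coeff p * (\<Prod>i\<in>#M. coeff (K_poly n r i f) (n - r))"
proof -
  have "degree (K_poly n r i f) \<le> n - r" if "i \<in># M" for i
    using that assms by (intro degree_K_poly) auto
  then show ?thesis
    by (simp add: coeff_mult_at_degree_bounds degree_prod_mset_le coeff_prod_mset_at_degree_bound)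
qed

lemma degree_K_expansion_poly_le:
  assumes "r \<le> n" "degree f \<le> n" "admissible r c"
    and "\<And>M. c M \<noteq> 0 \<Longrightarrow> degree (c M) + size M * (n - r) \<le> D"
  shows "degree (K_expansion_poly n r c f) \<le> D"
  unfolding K_expansion_poly_def
proof (rule degree_sum_le)
  show "finite {M. c M \<noteq> 0}"
    using assms(3) by (simp add: admissible_def)
  fix M assume "M \<in> {M. c M \<noteq> 0}"
  then show "degree (c M * (\<Prod>i\<in>#M. K_poly n r i f)) \<le> D"
    using assms K_term_degree_le[of r n f M "c M"] by (force simp: admissible_def)
qed

lemma coeff_K_expansion_poly_top:
  assumes "r \<le> n" "degree f \<le> n" "admissible r c"
    and "\<And>M. c M \<noteq> 0 \<Longrightarrow> degree (c M) + size M * (n - r) \<le> D"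
  shows "coeff (K_expansion_poly n r c f) D =
    (\<Sum>M | c M \<noteq> 0 \<and> degree (c M) + size M * (n - r) = D.
       lead_coeff (c M) * (\<Prod>i\<in>#M. coeff (K_poly n r i f) (n - r)))"
proof -
  have "coeff (c M * (\<Prod>i\<in>#M. K_poly n r i f)) D =
      (if degree (c M) + size M * (n - r) = D
       then lead_coeff (c M) * (\<Prod>i\<in>#M. coeff (K_poly n r i f) (n - r)) else 0)"
    if "c M \<noteq> 0" for M
  proof -
    have "set_mset M \<subseteq> {0..r}"
      using assms(3) that by (simp add: admissible_def)
    then show ?thesis
      using K_term_degree_le[of r n f M "c M"] coeff_K_term_top[of r n f M "c M"] assms(1,2) assms(4)[of M] that
      by (auto intro: coeff_eq_0)
  qed
  then show ?thesis
    using assms(3) unfolding K_expansion_poly_def admissible_def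
    by (simp add: coeff_sum sum.inter_filter[symmetric] conj_commute)
qed

lemma preserves_imp_top_form_eq_0:
  assumes "r \<le> n" "admissible r c" "preserves n (K_expansion n r c)" "n < D"
    and "\<And>M. c M \<noteq> 0 \<Longrightarrow> degree (c M) + size M * (n - r) \<le> D"
  shows "(\<Sum>M | c M \<noteq> 0 \<and> degree (c M) + size M * (n - r) = D. lead_coeff (c M) * (\<Prod>i\<in>#M. w i)) = 0"
proof -
  obtain f where f: "degree f \<le> n" "\<forall>i\<le>r. coeff (K_poly n r i f) (n - r) = w i"
    using exists_poly_K_poly_top_coeffs[OF assms(1)] by blast
  have top_coeffs: "(\<Prod>i\<in>#M. coeff (K_poly n r i f) (n - r)) = (\<Prod>i\<in>#M. w i)" if "c M \<noteq> 0" for M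
  proof -
    have "set_mset M \<subseteq> {0..r}"
      using assms(2) that by (simp add: admissible_def)
    then show ?thesis
      using f(2) by (auto intro!: arg_cong[where f = prod_mset] image_mset_cong)
  qed
  have "(\<Sum>M | c M \<noteq> 0 \<and> degree (c M) + size M * (n - r) = D. lead_coeff (c M) * (\<Prod>i\<in>#M. w i))
      = (\<Sum>M | c M \<noteq> 0 \<and> degree (c M) + size M * (n - r) = D.
           lead_coeff (c M) * (\<Prod>i\<in>#M. coeff (K_poly n r i f) (n - r)))"
    by (intro sum.cong refl) (simp add: top_coeffs)
  also have "\<dots> = coeff (K_expansion_poly n r c f) D"
    by (rule coeff_K_expansion_poly_top[OF assms(1) f(1) assms(2) assms(5), symmetric])
  also have "\<dots> = 0"
  proof (rule coeff_eq_0)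
    have "degree (K_expansion_poly n r c f) \<le> n"
      using assms(3) f(1) by (simp add: preserves_K_expansion_iff)
    then show "degree (K_expansion_poly n r c f) < D"
      using assms(4) by linarith
  qed
  finally show ?thesis .
qed

lemma preserves_imp_degree_bound:
  assumes "r \<le> n" "admissible r c" "preserves n (K_expansion n r c)" "c M \<noteq> 0"
  shows "degree (c M) + size M * (n - r) \<le> n"
proof (rule ccontr)
  define h where "h M = degree (c M) + size M * (n - r)" for M
  define D where "D = Max (h ` {M. c M \<noteq> 0})"
  have fin: "finite {M. c M \<noteq> 0}"
    using assms(2) by (simp add: admissible_def)
  have h_le_D: "h M' \<le> D" if "c M' \<noteq> 0" for M'
    using fin that by (simp add: D_def)
  have "D \<in> h ` {M. c M \<noteq> 0}"
    unfolding D_def using fin assms(4) by (intro Max_in) auto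
  then obtain M1 where M1: "c M1 \<noteq> 0" "h M1 = D"
    by auto
  assume "\<not> degree (c M) + size M * (n - r) \<le> n"
  then have "n < D"
    using h_le_D[OF assms(4)] by (simp add: h_def)
  have top_form: "(\<Sum>M | c M \<noteq> 0 \<and> h M = D. lead_coeff (c M) * (\<Prod>i\<in>#M. w i)) = 0" for w
    unfolding h_def
    by (rule preserves_imp_top_form_eq_0[OF assms(1-3) \<open>n < D\<close>]) (use h_le_D in \<open>simp add: h_def\<close>)
  have "lead_coeff (c M1) = 0"
  proof (rule monomial_coeffs_eq_0[where V = "{0..r}" and I = "{M. c M \<noteq> 0 \<and> h M = D}" and \<mu> = id])
    show "finite {M. c M \<noteq> 0 \<and> h M = D}"
      by (rule finite_subset[OF _ fin]) auto
    show "set_mset (id M) \<subseteq> {0..r}" if "M \<in> {M. c M \<noteq> 0 \<and> h M = D}" for M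
      using assms(2) that by (simp add: admissible_def)
    show "(\<Sum>M | c M \<noteq> 0 \<and> h M = D. lead_coeff (c M) * (\<Prod>i\<in>#id M. w i)) = 0" for w
      using top_form by simp
  qed (use M1 in simp_all)
  with M1(1) show False
    by simp
qed

lemma degree_bound_imp_preserves:
  assumes "r \<le> n" "admissible r c" "\<And>M. c M \<noteq> 0 \<Longrightarrow> degree (c M) + size M * (n - r) \<le> n"
  shows "preserves n (K_expansion n r c)"
  using assms degree_K_expansion_poly_le by (simp add: preserves_K_expansion_iff)

lemma Pset_degree_bound_iff:
  assumes "r \<le> n"
  shows "p \<in> Pset (int L * int r - (int L - 1) * int n) \<longleftrightarrow> (p \<noteq> 0 \<longrightarrow> degree p + L * (n - r) \<le> n)"
proof -
  define m where "m = L * (n - r)"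
  have "int L * int r - (int L - 1) * int n = int n - int m"
    using assms by (simp add: m_def of_nat_diff algebra_simps)
  then show ?thesis
    unfolding Pset_def m_def[symmetric] by (auto simp: le_nat_iff)
qed

theorem mainTheorem3:
  fixes n r :: nat and T :: diffop
  assumes "r \<le> n" and "order_le r T"
  shows "(\<exists>!c. admissible r c \<and> T = K_expansion n r c)
    \<and> (\<forall>c. admissible r c \<and> T = K_expansion n r c \<longrightarrow>
          (preserves n T \<longleftrightarrow>
            (\<forall>M. c M \<in> Pset (int (size M) * int r - (int (size M) - 1) * int n))))"
proof (intro conjI allI impI)
  obtain c where "admissible r c" "T = K_expansion n r c"
    using order_le_imp_in_K_expansions[OF assms] by (rule K_expansionsE)
  then show "\<exists>!c. admissible r c \<and> T = K_expansion n r c"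
    using K_expansion_inj[OF assms(1)] by blast
next
  fix c assume c: "admissible r c \<and> T = K_expansion n r c"
  have "(\<forall>M. c M \<in> Pset (int (size M) * int r - (int (size M) - 1) * int n)) \<longleftrightarrow>
      (\<forall>M. c M \<noteq> 0 \<longrightarrow> degree (c M) + size M * (n - r) \<le> n)"
    by (simp add: Pset_degree_bound_iff[OF assms(1)])
  then show "preserves n T \<longleftrightarrow> (\<forall>M. c M \<in> Pset (int (size M) * int r - (int (size M) - 1) * int n))"
    using c preserves_imp_degree_bound[OF assms(1)] degree_bound_imp_preserves[OF assms(1)] by blast
qed

end
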